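(* For each $k\in\mathbb{N}$ let $a_k,b_k,c_k\in\mathbb{R}$ with $a_k\ge0$, and $f_k(x)=a_kx^2+b_kx+c_k$ on $\mathbb{R}$ (so $f_k\in\Gamma_0(\mathbb{R})$). Then for $r>0$, $$e_rf_k(x)=\frac{a_kr}{2a_k+r}x^2+\frac{b_kr}{2a_k+r}x+c_k-\frac{b_k^2}{2(2a_k+r)}.$$ Moreover, suppose $f_k$ epiconverges to $f$ as $k\to\infty$. Then: (i) if $f\equiv\infty$, then $e_rf\equiv\infty$; (ii) if $f(x)=-\infty$ for some $x$, then $e_rf\equiv-\infty$; (iii) if $f$ is proper, then $e_rf(x)=arx^2+bx+c$ for some $a\ge0$ and $b,c\in\mathbb{R}$; this holds even in the case where $a_k\to\infty$ and $f$ is of the form $\iota_{\{\beta\}}+\gamma$ for constants $\beta,\gamma$.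
   Context: $\Gamma_0(\mathbb{R})$ is the set of proper convex lsc functions $\mathbb{R}\to\mathbb{R}\cup\{\infty\}$. The Moreau envelope is $e_rf(x)=\inf_{y}\{f(y)+\frac r2(y-x)^2\}$; for improper $f$ in (i),(ii) it is understood via the same formula. Epiconvergence $f_k\to f$ means the epigraphs of $f_k$ converge to the epigraph of $f$ in the Painlevé–Kuratowski sense. $\iota_{\{\beta\}}$ is the indicator function of $\{\beta\}$. *)

theory Defs
  imports "HOL-Analysis.Analysis"
begin

definition moreau_env :: "real \<Rightarrow> (real \<Rightarrow> ereal) \<Rightarrow> real \<Rightarrow> ereal" where
  "moreau_env r f x = (INF y. f y + ereal (r / 2 * (y - x)^2))"

definition epigraph :: "(real \<Rightarrow> ereal) \<Rightarrow> (real \<times> real) set" where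
  "epigraph f = {(x, \<alpha>). f x \<le> ereal \<alpha>}"

definition inner_limit :: "(nat \<Rightarrow> 'a::metric_space set) \<Rightarrow> 'a set" where
  "inner_limit C = {z. \<forall>e>0. eventually (\<lambda>k. \<exists>y\<in>C k. dist y z < e) sequentially}"

definition outer_limit :: "(nat \<Rightarrow> 'a::metric_space set) \<Rightarrow> 'a set" where
  "outer_limit C = {z. \<forall>e>0. frequently (\<lambda>k. \<exists>y\<in>C k. dist y z < e) sequentially}"

definition PK_converges :: "(nat \<Rightarrow> 'a::metric_space set) \<Rightarrow> 'a set \<Rightarrow> bool" where
  "PK_converges C D \<longleftrightarrow> inner_limit C = D \<and> outer_limit C = D"

definition epiconverges :: "(nat \<Rightarrow> real \<Rightarrow> ereal) \<Rightarrow> (real \<Rightarrow> ereal) \<Rightarrow> bool" where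
  "epiconverges fs f \<longleftrightarrow> PK_converges (\<lambda>k. epigraph (fs k)) (epigraph f)"

definition proper_fun :: "(real \<Rightarrow> ereal) \<Rightarrow> bool" where
  "proper_fun f \<longleftrightarrow> (\<forall>x. f x \<noteq> -\<infinity>) \<and> (\<exists>x. f x \<noteq> \<infinity>)"

end

theory Submission
  imports Defs
begin

text \<open>Completing the square shows that the envelope of a quadratic is attained at the proximal
point \<open>(r x - b) / (2 a + r)\<close>, which gives the closed form. For a proper limit \<open>f\<close>, the inner half of epiconvergence yields
\<open>limsup e\<^sub>r f\<^sub>k x \<le> e\<^sub>r f x\<close> for arbitrary functions, and the outer half yields
\<open>e\<^sub>r f x \<le> liminf e\<^sub>r f\<^sub>k x\<close> as soon as the proximal points stay bounded, since a
cluster point of them produces a point of the epigraph of \<open>f\<close>. For quadratics this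
boundedness comes from a point \<open>z\<close> where \<open>f\<close> is finite: near \<open>z\<close> the \<open>f\<^sub>k\<close> are eventually
bounded below and come close to \<open>f z\<close>, which pins down both the vertex and the minimum of the
parabola \<open>f\<^sub>k + r/2 (\<cdot> - x)\<^sup>2\<close>, whose curvature is at least \<open>r/2\<close>. Hence
\<open>e\<^sub>r f\<^sub>k \<rightarrow> e\<^sub>r f\<close> pointwise, and a pointwise limit of quadratics with nonnegative leading
coefficients is again such a quadratic.\<close>

definition moreau_quad :: "real \<Rightarrow> real \<Rightarrow> real \<Rightarrow> real \<Rightarrow> real \<Rightarrow> real" where
  "moreau_quad a b c r x =
     a * r / (2 * a + r) * x^2 + b * r / (2 * a + r) * x + c - b^2 / (2 * (2 * a + r))"

definition prox_quad :: "real \<Rightarrow> real \<Rightarrow> real \<Rightarrow> real \<Rightarrow> real" where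
  "prox_quad a b r x = (r * x - b) / (2 * a + r)"

lemma quadratic_plus_proximity_eq:
  fixes a b c r x y :: real
  assumes "a \<ge> 0" "r > 0"
  shows "a * y^2 + b * y + c + r / 2 * (y - x)^2 =
         moreau_quad a b c r x + (a + r / 2) * (y - prox_quad a b r x)^2"
proof -
  define p where "p = 1 / (2 * a + r)"
  have p: "(2 * a + r) * p = 1"
    using assms unfolding p_def by simp
  have "moreau_quad a b c r x = a * r * p * x^2 + b * r * p * x + c - b^2 * p / 2"
    unfolding p_def moreau_quad_def by simp
  moreover have "prox_quad a b r x = (r * x - b) * p"
    unfolding p_def prox_quad_def by simp
  ultimately show ?thesis
    using p by algebra
qed

lemma moreau_env_le:
  "moreau_env r f x \<le> f y + ereal (r / 2 * (y - x)^2)"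
  unfolding moreau_env_def by (rule INF_lower) simp

lemma moreau_env_quadratic:
  fixes a b c r x :: real
  assumes "a \<ge> 0" "r > 0"
  shows "moreau_env r (\<lambda>y. ereal (a * y^2 + b * y + c)) x = ereal (moreau_quad a b c r x)"
proof (rule antisym)
  let ?p = "prox_quad a b r x"
  have "moreau_env r (\<lambda>y. ereal (a * y^2 + b * y + c)) x \<le>
        ereal (a * ?p^2 + b * ?p + c + r / 2 * (?p - x)^2)"
    using moreau_env_le[of r "\<lambda>y. ereal (a * y^2 + b * y + c)" x ?p] by simp
  also have "\<dots> = ereal (moreau_quad a b c r x)"
    by (subst quadratic_plus_proximity_eq[OF assms]) simp
  finally show "moreau_env r (\<lambda>y. ereal (a * y^2 + b * y + c)) x \<le> ereal (moreau_quad a b c r x)" .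
  show "ereal (moreau_quad a b c r x) \<le> moreau_env r (\<lambda>y. ereal (a * y^2 + b * y + c)) x"
    unfolding moreau_env_def
  proof (rule INF_greatest)
    fix y
    have "0 \<le> (a + r / 2) * (y - ?p)^2"
      using assms by simp
    then show "ereal (moreau_quad a b c r x) \<le> ereal (a * y^2 + b * y + c) + ereal (r / 2 * (y - x)^2)"
      using quadratic_plus_proximity_eq[OF assms, where b = b and c = c and x = x and y = y] by simp
  qed
qed

lemma moreau_env_infinity:
  assumes "\<And>y. f y = \<infinity>"
  shows "moreau_env r f x = \<infinity>"
  using assms unfolding moreau_env_def by simp

lemma moreau_env_minus_infinity:
  assumes "f y = -\<infinity>"
  shows "moreau_env r f x = -\<infinity>"
  using moreau_env_le[of r f x y] assms by simp

lemma inner_limit_epigraphD: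
  assumes "(z, \<beta>) \<in> inner_limit (\<lambda>k. epigraph (fs k))" and "e > 0"
  shows "eventually (\<lambda>k. \<exists>u. \<bar>u - z\<bar> < e \<and> fs k u < ereal (\<beta> + e)) sequentially"
proof -
  have "eventually (\<lambda>k. \<exists>p\<in>epigraph (fs k). dist p (z, \<beta>) < e) sequentially"
    using assms unfolding inner_limit_def by blast
  then show ?thesis
  proof (rule eventually_mono)
    fix k
    assume "\<exists>p\<in>epigraph (fs k). dist p (z, \<beta>) < e"
    then obtain u \<gamma> where epi: "fs k u \<le> ereal \<gamma>" and near: "dist (u, \<gamma>) (z, \<beta>) < e"
      unfolding epigraph_def by auto
    have "\<bar>u - z\<bar> < e" "\<bar>\<gamma> - \<beta>\<bar> < e"
      using near dist_fst_le[of "(u, \<gamma>)" "(z, \<beta>)"] dist_snd_le[of "(u, \<gamma>)" "(z, \<beta>)"]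
      by (auto simp: dist_real_def)
    with epi show "\<exists>u. \<bar>u - z\<bar> < e \<and> fs k u < ereal (\<beta> + e)"
      by (intro exI[of _ u]) (auto elim: order.strict_trans1)
  qed
qed

lemma notin_outer_limit_epigraphD:
  assumes "(z, \<alpha>) \<notin> outer_limit (\<lambda>k. epigraph (fs k))"
  obtains \<delta> where "\<delta> > 0"
    and "eventually (\<lambda>k. \<forall>y. \<bar>y - z\<bar> < \<delta> \<longrightarrow> ereal \<alpha> < fs k y) sequentially"
proof -
  obtain \<delta> :: real where "\<delta> > 0"
    and far: "eventually (\<lambda>k. \<forall>p\<in>epigraph (fs k). \<not> dist p (z, \<alpha>) < \<delta>) sequentially"
    using assms unfolding outer_limit_def frequently_def by auto
  have "\<forall>y. \<bar>y - z\<bar> < \<delta> \<longrightarrow> ereal \<alpha> < fs k y"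
    if "\<forall>p\<in>epigraph (fs k). \<not> dist p (z, \<alpha>) < \<delta>" for k
  proof (intro allI impI)
    fix y
    assume "\<bar>y - z\<bar> < \<delta>"
    then have "(y, \<alpha>) \<notin> epigraph (fs k)"
      using that by (auto simp: dist_Pair_Pair dist_real_def)
    then show "ereal \<alpha> < fs k y"
      by (simp add: epigraph_def not_le)
  qed
  with far have "eventually (\<lambda>k. \<forall>y. \<bar>y - z\<bar> < \<delta> \<longrightarrow> ereal \<alpha> < fs k y) sequentially"
    by (rule eventually_mono)
  with \<open>\<delta> > 0\<close> show thesis
    by (rule that)
qed

lemma outer_limit_subseqI:
  assumes "strict_mono s" and "\<And>n. p n \<in> C (s n)" and "p \<longlonglongrightarrow> z"
  shows "z \<in> outer_limit C"
  unfolding outer_limit_def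
proof (intro CollectI allI impI)
  fix e :: real
  assume "e > 0"
  with assms(3) have "eventually (\<lambda>n. dist (p n) z < e) sequentially"
    by (rule tendstoD)
  then obtain N where N: "\<And>n. n \<ge> N \<Longrightarrow> dist (p n) z < e"
    by (auto simp: eventually_sequentially)
  show "frequently (\<lambda>k. \<exists>y\<in>C k. dist y z < e) sequentially"
    unfolding frequently_sequentially
  proof
    fix M
    have "max M N \<le> s (max M N)"
      using assms(1) by (rule seq_suble)
    with N[of "max M N"] assms(2)[of "max M N"]
    show "\<exists>k\<ge>M. \<exists>y\<in>C k. dist y z < e"
      by (intro exI[of _ "s (max M N)"]) auto
  qed
qed

lemma eventually_moreau_env_less:
  assumes inner: "epigraph f \<subseteq> inner_limit (\<lambda>k. epigraph (fs k))"
    and less: "f y + ereal (r / 2 * (y - x)^2) < ereal b"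
  shows "eventually (\<lambda>k. moreau_env r (fs k) x < ereal b) sequentially"
proof -
  define d where "d u = r / 2 * (u - x)^2" for u
  have "f y < ereal (b - d y)"
    using less unfolding d_def by (cases "f y") auto
  then obtain \<beta> where \<beta>: "f y < ereal \<beta>" "\<beta> < b - d y"
    using ereal_dense2 by fastforce
  define \<epsilon> where "\<epsilon> = (b - d y - \<beta>) / 2"
  have "\<epsilon> > 0" and b: "b = \<beta> + 2 * \<epsilon> + d y"
    using \<beta> unfolding \<epsilon>_def by (simp_all add: field_simps)
  have "isCont d y"
    unfolding d_def by (intro continuous_intros)
  then obtain \<delta> where "\<delta> > 0" and \<delta>: "\<And>u. \<bar>u - y\<bar> < \<delta> \<Longrightarrow> d u < d y + \<epsilon>"
    using \<open>\<epsilon> > 0\<close> unfolding continuous_at_eps_delta dist_real_def by fastforce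
  have "(y, \<beta>) \<in> inner_limit (\<lambda>k. epigraph (fs k))"
    using inner \<beta>(1) unfolding epigraph_def by auto
  then have "eventually (\<lambda>k. \<exists>u. \<bar>u - y\<bar> < min \<delta> \<epsilon> \<and> fs k u < ereal (\<beta> + min \<delta> \<epsilon>)) sequentially"
    using \<open>\<delta> > 0\<close> \<open>\<epsilon> > 0\<close> by (intro inner_limit_epigraphD) auto
  then show ?thesis
  proof (rule eventually_mono)
    fix k
    assume "\<exists>u. \<bar>u - y\<bar> < min \<delta> \<epsilon> \<and> fs k u < ereal (\<beta> + min \<delta> \<epsilon>)"
    then obtain u where "\<bar>u - y\<bar> < \<delta>" and u: "fs k u < ereal (\<beta> + min \<delta> \<epsilon>)"
      by auto
    have "d u < d y + \<epsilon>"
      using \<delta> \<open>\<bar>u - y\<bar> < \<delta>\<close> by blast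
    moreover have "fs k u < ereal (\<beta> + \<epsilon>)"
      using u by (rule order.strict_trans2) simp
    ultimately have "fs k u + ereal (d u) < ereal b"
      unfolding b by (cases "fs k u") auto
    moreover have "moreau_env r (fs k) x \<le> fs k u + ereal (d u)"
      unfolding d_def by (rule moreau_env_le)
    ultimately show "moreau_env r (fs k) x < ereal b"
      by order
  qed
qed

lemma Limsup_moreau_env_le:
  assumes "epigraph f \<subseteq> inner_limit (\<lambda>k. epigraph (fs k))"
  shows "Limsup sequentially (\<lambda>k. moreau_env r (fs k) x) \<le> moreau_env r f x"
  unfolding moreau_env_def[of r f x]
proof (rule INF_greatest, rule dense_ge)
  fix y B
  assume less: "f y + ereal (r / 2 * (y - x)^2) < B"
  show "Limsup sequentially (\<lambda>k. moreau_env r (fs k) x) \<le> B"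
  proof (cases B)
    case (real b)
    have "eventually (\<lambda>k. moreau_env r (fs k) x < ereal b) sequentially"
      using less real by (intro eventually_moreau_env_less[OF assms]) simp
    then show ?thesis
      by (rule Limsup_bounded[OF eventually_mono]) (simp add: real)
  qed (use less in auto)
qed

lemma moreau_env_le_Liminf:
  fixes fs :: "nat \<Rightarrow> real \<Rightarrow> ereal" and Y :: "nat \<Rightarrow> real"
  assumes outer: "outer_limit (\<lambda>k. epigraph (fs k)) \<subseteq> epigraph f"
    and attained: "\<And>k. fs k (Y k) + ereal (r / 2 * (Y k - x)^2) \<le> moreau_env r (fs k) x"
    and "Bseq Y"
  shows "moreau_env r f x \<le> Liminf sequentially (\<lambda>k. moreau_env r (fs k) x)"
proof (rule dense_ge)
  fix B
  assume B: "Liminf sequentially (\<lambda>k. moreau_env r (fs k) x) < B"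
  show "moreau_env r f x \<le> B"
  proof (cases B)
    case (real M)
    define d where "d u = r / 2 * (u - x)^2" for u
    have "\<not> eventually (\<lambda>k. \<not> moreau_env r (fs k) x < ereal M) sequentially"
    proof
      assume "eventually (\<lambda>k. \<not> moreau_env r (fs k) x < ereal M) sequentially"
      then have "ereal M \<le> Liminf sequentially (\<lambda>k. moreau_env r (fs k) x)"
        by (rule Liminf_bounded[OF eventually_mono]) simp
      with B show False
        unfolding real by simp
    qed
    from not_eventually_sequentiallyD[OF this] obtain s :: "nat \<Rightarrow> nat"
      where "strict_mono s" and below: "\<forall>n. moreau_env r (fs (s n)) x < ereal M"
      by auto
    have "bounded (range (Y \<circ> s))"
      using \<open>Bseq Y\<close> unfolding Bseq_eq_bounded by (rule bounded_subset) auto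
    then obtain w \<sigma> where "strict_mono \<sigma>" and lim: "(Y \<circ> s \<circ> \<sigma>) \<longlonglongrightarrow> w"
      using bounded_imp_convergent_subsequence by blast
    define p where "p n = (Y (s (\<sigma> n)), M - d (Y (s (\<sigma> n))))" for n
    have "p n \<in> epigraph (fs ((s \<circ> \<sigma>) n))" for n
    proof -
      have "fs (s (\<sigma> n)) (Y (s (\<sigma> n))) + ereal (d (Y (s (\<sigma> n)))) < ereal M"
        using attained below unfolding d_def by (blast intro: order.strict_trans1)
      then show ?thesis
        unfolding p_def epigraph_def by (cases "fs (s (\<sigma> n)) (Y (s (\<sigma> n)))") auto
    qed
    moreover have "p \<longlonglongrightarrow> (w, M - d w)"
      using lim unfolding p_def d_def o_def by (intro tendsto_intros)
    ultimately have "(w, M - d w) \<in> outer_limit (\<lambda>k. epigraph (fs k))"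
      by (rule outer_limit_subseqI[OF strict_mono_o[OF \<open>strict_mono s\<close> \<open>strict_mono \<sigma>\<close>]])
    then have "f w \<le> ereal (M - d w)"
      using outer unfolding epigraph_def by auto
    then have "f w + ereal (d w) \<le> ereal M"
      by (cases "f w") auto
    then show ?thesis
      using moreau_env_le[of r f x w] unfolding real d_def by order
  qed (use B in auto)
qed

lemma tendsto_of_Limsup_le_Liminf:
  fixes X :: "'a \<Rightarrow> real"
  assumes "Limsup F (\<lambda>k. ereal (X k)) \<le> ereal L" and "ereal L \<le> Liminf F (\<lambda>k. ereal (X k))"
    and "F \<noteq> bot"
  shows "(X \<longlongrightarrow> L) F"
proof -
  have "((\<lambda>k. ereal (X k)) \<longlongrightarrow> ereal L) F"
    using assms Liminf_le_Limsup[OF \<open>F \<noteq> bot\<close>, of "\<lambda>k. ereal (X k)"]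
    by (intro Liminf_eq_Limsup) auto
  then show ?thesis
    by (simp add: lim_ereal)
qed

lemma parabola_vertex_bounds:
  fixes A q v u t M m \<kappa> :: real
  assumes "0 < \<kappa>" "\<kappa> \<le> A" "0 < t"
    and upper: "q + A * (u - v)^2 \<le> M"
    and lower: "\<And>y. \<bar>y - u\<bar> \<le> t \<Longrightarrow> m \<le> q + A * (y - v)^2"
  shows "\<bar>v - u\<bar> \<le> t + (M - m) / (\<kappa> * t)" and "m - (M - m)^2 / (\<kappa> * t^2) \<le> q"
proof -
  have "m \<le> M"
    using lower[of u] upper \<open>0 < t\<close> by simp
  then have nonneg: "0 \<le> (M - m) / (\<kappa> * t)" "0 \<le> (M - m)^2 / (\<kappa> * t^2)"
    using \<open>0 < \<kappa>\<close> \<open>0 < t\<close> by simp_all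
  consider "\<bar>v - u\<bar> < t" | "t \<le> \<bar>v - u\<bar>"
    by linarith
  then have "\<bar>v - u\<bar> \<le> t + (M - m) / (\<kappa> * t) \<and> m - (M - m)^2 / (\<kappa> * t^2) \<le> q"
  proof cases
    case 1
    then show ?thesis
      using lower[of v] nonneg by simp
  next
    case 2
    define d where "d = \<bar>v - u\<bar>"
    define y where "y = u + t * sgn (v - u)"
    have "\<bar>y - u\<bar> = t" "(y - v)^2 = (d - t)^2" "(u - v)^2 = d^2"
      using 2 \<open>0 < t\<close> unfolding y_def d_def by (auto simp: sgn_if abs_if power2_eq_square algebra_simps)
    with lower[of y] upper have "A * (d^2 - (d - t)^2) \<le> M - m"
      by (simp add: algebra_simps)
    moreover have "A * t * d \<le> A * (d^2 - (d - t)^2)"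
      using 2 \<open>0 < t\<close> \<open>0 < \<kappa>\<close> \<open>\<kappa> \<le> A\<close> unfolding d_def
      by (simp add: power2_eq_square algebra_simps mult_left_mono)
    ultimately have Atd: "A * t * d \<le> M - m"
      by linarith
    have "\<kappa> * t * d \<le> A * t * d"
      using \<open>\<kappa> \<le> A\<close> \<open>0 < t\<close> by (simp add: d_def mult_right_mono)
    with Atd have \<kappa>td: "\<kappa> * t * d \<le> M - m"
      by linarith
    then have "d \<le> (M - m) / (\<kappa> * t)"
      using \<open>0 < \<kappa>\<close> \<open>0 < t\<close> by (simp add: field_simps mult.commute mult.left_commute)
    from Atd \<kappa>td have "(A * t * d) * (\<kappa> * t * d) \<le> (M - m) * (M - m)"
      using \<open>m \<le> M\<close> \<open>0 < \<kappa>\<close> \<open>0 < t\<close> by (intro mult_mono) (simp_all add: d_def)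
    then have "A * d^2 \<le> (M - m)^2 / (\<kappa> * t^2)"
      using \<open>0 < \<kappa>\<close> \<open>0 < t\<close> by (simp add: field_simps power2_eq_square)
    moreover have "A * (d - t)^2 \<le> A * d^2"
      using 2 \<open>0 < t\<close> \<open>0 < \<kappa>\<close> \<open>\<kappa> \<le> A\<close> unfolding d_def
      by (intro mult_left_mono power_mono) auto
    moreover have "m \<le> q + A * (d - t)^2"
      using lower[of y] \<open>\<bar>y - u\<bar> = t\<close> \<open>(y - v)^2 = (d - t)^2\<close> by simp
    ultimately show ?thesis
      using \<open>d \<le> (M - m) / (\<kappa> * t)\<close> \<open>0 < t\<close> unfolding d_def by linarith
  qed
  then show "\<bar>v - u\<bar> \<le> t + (M - m) / (\<kappa> * t)" and "m - (M - m)^2 / (\<kappa> * t^2) \<le> q"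
    by simp_all
qed

lemma quadratic_prox_bounds:
  fixes a b c r x z u t \<mu> m :: real
  assumes "a \<ge> 0" "r > 0" "t > 0"
    and u: "\<bar>u - z\<bar> < t" "a * u^2 + b * u + c \<le> \<mu>"
    and above: "\<And>y. \<bar>y - z\<bar> < 2 * t \<Longrightarrow> m \<le> a * y^2 + b * y + c"
  defines "M \<equiv> \<mu> + r / 2 * (\<bar>z - x\<bar> + t)^2"
  shows "\<bar>prox_quad a b r x - z\<bar> \<le> 2 * t + (M - m) / (r / 2 * t)"
    and "m - (M - m)^2 / (r / 2 * t^2) \<le> moreau_quad a b c r x"
proof -
  define h where "h y = a * y^2 + b * y + c + r / 2 * (y - x)^2" for y
  have h: "h y = moreau_quad a b c r x + (a + r / 2) * (y - prox_quad a b r x)^2" for y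
    unfolding h_def using \<open>a \<ge> 0\<close> \<open>r > 0\<close> by (rule quadratic_plus_proximity_eq)
  have "(u - x)^2 \<le> (\<bar>z - x\<bar> + t)^2"
    using u(1) by (intro power2_le_iff_abs_le[THEN iffD2]) auto
  then have "r / 2 * (u - x)^2 \<le> r / 2 * (\<bar>z - x\<bar> + t)^2"
    using \<open>r > 0\<close> by (intro mult_left_mono) auto
  then have "h u \<le> M"
    using u(2) unfolding h_def M_def by linarith
  moreover have "m \<le> h y" if "\<bar>y - u\<bar> \<le> t" for y
  proof -
    have "m \<le> a * y^2 + b * y + c"
      using that u(1) by (intro above) linarith
    moreover have "0 \<le> r / 2 * (y - x)^2"
      using \<open>r > 0\<close> by simp
    ultimately show ?thesis
      unfolding h_def by linarith
  qed
  moreover have "0 < r / 2" "r / 2 \<le> a + r / 2"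
    using \<open>r > 0\<close> \<open>a \<ge> 0\<close> by simp_all
  ultimately have "\<bar>prox_quad a b r x - u\<bar> \<le> t + (M - m) / (r / 2 * t)"
    and "m - (M - m)^2 / (r / 2 * t^2) \<le> moreau_quad a b c r x"
    using parabola_vertex_bounds[OF _ _ \<open>t > 0\<close>] unfolding h by blast+
  with u(1) show "\<bar>prox_quad a b r x - z\<bar> \<le> 2 * t + (M - m) / (r / 2 * t)"
    and "m - (M - m)^2 / (r / 2 * t^2) \<le> moreau_quad a b c r x"
    by linarith+
qed

lemma epilimit_of_quadratics_prox_bounds:
  fixes a b c :: "nat \<Rightarrow> real"
  assumes a_nonneg: "\<And>k. a k \<ge> 0" and "r > 0"
    and epi: "epiconverges (\<lambda>k y. ereal (a k * y^2 + b k * y + c k)) f"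
    and "f z = ereal \<phi>"
  obtains D m where "eventually (\<lambda>k. \<bar>prox_quad (a k) (b k) r x - z\<bar> \<le> D
                                   \<and> m \<le> moreau_quad (a k) (b k) (c k) r x) sequentially"
proof -
  let ?F = "\<lambda>k y. ereal (a k * y^2 + b k * y + c k)"
  have inner: "inner_limit (\<lambda>k. epigraph (?F k)) = epigraph f"
    and outer: "outer_limit (\<lambda>k. epigraph (?F k)) = epigraph f"
    using epi unfolding epiconverges_def PK_converges_def by auto
  have "(z, \<phi> - 1) \<notin> outer_limit (\<lambda>k. epigraph (?F k))"
    using \<open>f z = ereal \<phi>\<close> unfolding outer by (simp add: epigraph_def)
  then obtain \<delta> where "\<delta> > 0"
    and above: "eventually (\<lambda>k. \<forall>y. \<bar>y - z\<bar> < \<delta> \<longrightarrow> ereal (\<phi> - 1) < ?F k y) sequentially"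
    by (rule notin_outer_limit_epigraphD)
  define t where "t = \<delta> / 2"
  have "t > 0"
    using \<open>\<delta> > 0\<close> unfolding t_def by simp
  have "(z, \<phi>) \<in> inner_limit (\<lambda>k. epigraph (?F k))"
    using \<open>f z = ereal \<phi>\<close> unfolding inner by (simp add: epigraph_def)
  then have near: "eventually (\<lambda>k. \<exists>u. \<bar>u - z\<bar> < t \<and> ?F k u < ereal (\<phi> + t)) sequentially"
    using \<open>t > 0\<close> by (rule inner_limit_epigraphD)
  define m where "m = \<phi> - 1"
  define M where "M = \<phi> + t + r / 2 * (\<bar>z - x\<bar> + t)^2"
  have "eventually (\<lambda>k. \<bar>prox_quad (a k) (b k) r x - z\<bar> \<le> 2 * t + (M - m) / (r / 2 * t)
          \<and> m - (M - m)^2 / (r / 2 * t^2) \<le> moreau_quad (a k) (b k) (c k) r x) sequentially"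
    using above near
  proof eventually_elim
    case (elim k)
    then obtain u where "\<bar>u - z\<bar> < t" "a k * u^2 + b k * u + c k \<le> \<phi> + t"
      by fastforce
    moreover have "m \<le> a k * y^2 + b k * y + c k" if "\<bar>y - z\<bar> < 2 * t" for y
      using elim(1) that unfolding m_def t_def by force
    ultimately show ?case
      using quadratic_prox_bounds[OF a_nonneg \<open>r > 0\<close> \<open>t > 0\<close>] unfolding M_def by blast
  qed
  then show thesis
    by (rule that)
qed

lemma epilimit_of_quadratics_moreau_env:
  fixes a b c :: "nat \<Rightarrow> real"
  assumes a_nonneg: "\<And>k. a k \<ge> 0" and "r > 0"
    and epi: "epiconverges (\<lambda>k y. ereal (a k * y^2 + b k * y + c k)) f"
    and "proper_fun f"
  shows "\<exists>L. moreau_env r f x = ereal L \<and> (\<lambda>k. moreau_quad (a k) (b k) (c k) r x) \<longlonglongrightarrow> L"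
proof -
  let ?F = "\<lambda>k y. ereal (a k * y^2 + b k * y + c k)"
  let ?Q = "\<lambda>k. moreau_quad (a k) (b k) (c k) r x"
  let ?P = "\<lambda>k. prox_quad (a k) (b k) r x"
  have env: "moreau_env r (?F k) x = ereal (?Q k)" for k
    using a_nonneg \<open>r > 0\<close> by (rule moreau_env_quadratic)
  have inner: "epigraph f \<subseteq> inner_limit (\<lambda>k. epigraph (?F k))"
    and outer: "outer_limit (\<lambda>k. epigraph (?F k)) \<subseteq> epigraph f"
    using epi unfolding epiconverges_def PK_converges_def by auto
  obtain z where "f z \<noteq> \<infinity>" and "f z \<noteq> -\<infinity>"
    using \<open>proper_fun f\<close> unfolding proper_fun_def by blast
  then obtain \<phi> where z: "f z = ereal \<phi>"
    by (cases "f z") auto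
  obtain D m where bounds: "eventually (\<lambda>k. \<bar>?P k - z\<bar> \<le> D \<and> m \<le> ?Q k) sequentially"
    using epilimit_of_quadratics_prox_bounds[OF a_nonneg \<open>r > 0\<close> epi z] by blast
  have "?F k (?P k) + ereal (r / 2 * (?P k - x)^2) \<le> moreau_env r (?F k) x" for k
    using quadratic_plus_proximity_eq[OF a_nonneg[of k] \<open>r > 0\<close>,
        where b = "b k" and c = "c k" and x = x and y = "?P k"]
    unfolding env by simp
  moreover have "Bseq ?P"
  proof (rule Bseq_eventually_mono[OF _ Bfun_const])
    show "eventually (\<lambda>k. norm (?P k) \<le> norm (\<bar>z\<bar> + D)) sequentially"
      using bounds by (rule eventually_mono) auto
  qed
  ultimately have "moreau_env r f x \<le> Liminf sequentially (\<lambda>k. moreau_env r (?F k) x)"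
    by (rule moreau_env_le_Liminf[OF outer])
  then have lower: "moreau_env r f x \<le> Liminf sequentially (\<lambda>k. ereal (?Q k))"
    unfolding env .
  have "Limsup sequentially (\<lambda>k. moreau_env r (?F k) x) \<le> moreau_env r f x"
    by (rule Limsup_moreau_env_le[OF inner])
  then have upper: "Limsup sequentially (\<lambda>k. ereal (?Q k)) \<le> moreau_env r f x"
    unfolding env .
  have "ereal m \<le> Liminf sequentially (\<lambda>k. ereal (?Q k))"
    using bounds by (intro Liminf_bounded) (auto elim: eventually_mono)
  also have "\<dots> \<le> Limsup sequentially (\<lambda>k. ereal (?Q k))"
    by (simp add: Liminf_le_Limsup)
  finally have "ereal m \<le> moreau_env r f x"
    using upper by order
  moreover have "moreau_env r f x \<le> ereal (\<phi> + r / 2 * (z - x)^2)"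
    using moreau_env_le[of r f x z] z by simp
  ultimately obtain L where L: "moreau_env r f x = ereal L"
    by (cases "moreau_env r f x") auto
  moreover have "?Q \<longlonglongrightarrow> L"
    using upper lower unfolding L by (rule tendsto_of_Limsup_le_Liminf) simp
  ultimately show ?thesis
    by blast
qed

lemma tendsto_quadratics_imp_quadratic:
  fixes A B C :: "nat \<Rightarrow> real" and g :: "real \<Rightarrow> real"
  assumes lim: "\<And>x. (\<lambda>k. A k * x^2 + B k * x + C k) \<longlonglongrightarrow> g x"
  shows "\<exists>\<alpha> \<beta> \<gamma>. A \<longlonglongrightarrow> \<alpha> \<and> (\<forall>x. g x = \<alpha> * x^2 + \<beta> * x + \<gamma>)"
proof -
  have C: "C \<longlonglongrightarrow> g 0"
    using lim[of 0] by simp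
  have plus: "(\<lambda>k. A k + B k + C k) \<longlonglongrightarrow> g 1" and minus: "(\<lambda>k. A k - B k + C k) \<longlonglongrightarrow> g (-1)"
    using lim[of 1] lim[of "-1"] by simp_all
  have "(\<lambda>k. ((A k + B k + C k) + (A k - B k + C k)) / 2 - C k) \<longlonglongrightarrow> (g 1 + g (-1)) / 2 - g 0"
    by (intro tendsto_intros plus minus C) simp
  then have A: "A \<longlonglongrightarrow> (g 1 + g (-1)) / 2 - g 0"
    by (simp add: field_simps)
  have "(\<lambda>k. ((A k + B k + C k) - (A k - B k + C k)) / 2) \<longlonglongrightarrow> (g 1 - g (-1)) / 2"
    by (intro tendsto_intros plus minus) simp
  then have B: "B \<longlonglongrightarrow> (g 1 - g (-1)) / 2"
    by (simp add: field_simps)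
  have "g x = ((g 1 + g (-1)) / 2 - g 0) * x^2 + (g 1 - g (-1)) / 2 * x + g 0" for x
    using lim[of x] by (rule LIMSEQ_unique) (intro tendsto_intros A B C)
  with A show ?thesis
    by blast
qed

lemma epilimit_of_quadratics_moreau_env_quadratic:
  fixes a b c :: "nat \<Rightarrow> real"
  assumes a_nonneg: "\<And>k. a k \<ge> 0" and "r > 0"
    and epi: "epiconverges (\<lambda>k y. ereal (a k * y^2 + b k * y + c k)) f"
    and "proper_fun f"
  shows "\<exists>\<alpha> \<beta> \<gamma>. \<alpha> \<ge> 0 \<and> (\<forall>x. moreau_env r f x = ereal (\<alpha> * r * x^2 + \<beta> * x + \<gamma>))"
proof -
  obtain g where g: "\<And>x. moreau_env r f x = ereal (g x)"
    and lim: "\<And>x. (\<lambda>k. moreau_quad (a k) (b k) (c k) r x) \<longlonglongrightarrow> g x"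
    using epilimit_of_quadratics_moreau_env[OF assms] by metis
  define A where "A k = a k * r / (2 * a k + r)" for k
  have "(\<lambda>k. A k * x^2 + b k * r / (2 * a k + r) * x + (c k - (b k)^2 / (2 * (2 * a k + r))))
          \<longlonglongrightarrow> g x" for x
    using lim[of x] unfolding A_def moreau_quad_def by (simp add: algebra_simps)
  from tendsto_quadratics_imp_quadratic[OF this]
  obtain \<alpha> \<beta> \<gamma> where "A \<longlonglongrightarrow> \<alpha>" and quad: "\<And>x. g x = \<alpha> * x^2 + \<beta> * x + \<gamma>"
    by blast
  moreover have "A k \<ge> 0" for k
    using a_nonneg[of k] \<open>r > 0\<close> unfolding A_def by simp
  ultimately have "\<alpha> \<ge> 0"
    by (intro LIMSEQ_le_const) auto
  with \<open>r > 0\<close> show ?thesis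
    by (intro exI[of _ "\<alpha> / r"] exI[of _ \<beta>] exI[of _ \<gamma>]) (simp add: g quad)
qed

theorem theorem3p1:
  fixes a b c :: "nat \<Rightarrow> real" and f :: "real \<Rightarrow> ereal" and r :: real
  assumes a_nonneg: "\<And>k. a k \<ge> 0"
    and r_pos: "r > 0"
  shows "(\<forall>k x. moreau_env r (\<lambda>y. ereal (a k * y^2 + b k * y + c k)) x =
            ereal (a k * r / (2 * a k + r) * x^2 + b k * r / (2 * a k + r) * x + c k
                   - (b k)^2 / (2 * (2 * a k + r))))
       \<and> (epiconverges (\<lambda>k y. ereal (a k * y^2 + b k * y + c k)) f \<longrightarrow>
            ((\<forall>x. f x = \<infinity>) \<longrightarrow> (\<forall>x. moreau_env r f x = \<infinity>))
          \<and> ((\<exists>x. f x = -\<infinity>) \<longrightarrow> (\<forall>x. moreau_env r f x = -\<infinity>))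
          \<and> (proper_fun f \<longrightarrow>
               (\<exists>\<alpha> \<beta> \<gamma>. \<alpha> \<ge> 0 \<and> (\<forall>x. moreau_env r f x = ereal (\<alpha> * r * x^2 + \<beta> * x + \<gamma>)))))"
proof (intro conjI impI allI)
  fix k x
  show "moreau_env r (\<lambda>y. ereal (a k * y^2 + b k * y + c k)) x =
            ereal (a k * r / (2 * a k + r) * x^2 + b k * r / (2 * a k + r) * x + c k
                   - (b k)^2 / (2 * (2 * a k + r)))"
    using moreau_env_quadratic[OF a_nonneg r_pos] unfolding moreau_quad_def .
next
  fix x
  assume "\<forall>x. f x = \<infinity>"
  then show "moreau_env r f x = \<infinity>"
    by (intro moreau_env_infinity) simp
next
  fix x
  assume "\<exists>x. f x = -\<infinity>"
  then show "moreau_env r f x = -\<infinity>"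
    using moreau_env_minus_infinity by blast
next
  assume "epiconverges (\<lambda>k y. ereal (a k * y^2 + b k * y + c k)) f" and "proper_fun f"
  then show "\<exists>\<alpha> \<beta> \<gamma>. \<alpha> \<ge> 0 \<and> (\<forall>x. moreau_env r f x = ereal (\<alpha> * r * x^2 + \<beta> * x + \<gamma>))"
    by (rule epilimit_of_quadratics_moreau_env_quadratic[OF a_nonneg r_pos])
qed

end
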